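(* If $\pi_0(\theta^* )>0$, then with probability 1, for every $x'\in\mathcal{X}$, $$\lim_{k\to\infty}\Big|\hat q_k(x';x_{k-1},u_{k-1})-q(x';\theta^*,x_{k-1},u_{k-1})\Big|=0,$$ where $\hat q_k(x';x,u):=\sum_{\theta\in\Theta}\pi_{k-1}(\theta)\,q(x';\theta,x,u)$ is the marginal (posterior-predictive) transition kernel. In particular $\lim_{k\to\infty}\hat q_k(x_k;x_{k-1},u_{k-1})-q(x_k;\theta^*,x_{k-1},u_{k-1})=0$ w.p.1.
   Context: System: $x_{k+1}=f(x_k,u_k,w_k,\theta)$, $x_k\in\mathcal{X}$, $u_k\in\mathcal{U}$, $w_k$ i.i.d. with a density. $\Theta=\{\theta_1,\theta_2,\dots\}$ is countably infinite; data are generated by the true parameter $\theta^*\in\Theta$; each $u_k$ is a measurable function of past observations. The transition density $q(x';\theta,x,u)$ of $x_{k+1}$ given $(x_k,u_k)=(x,u)$ is continuously differentiable, strictly positive, with bounded first derivative in $x'$. Posterior: $\pi_k(\theta)=q(x_k;\theta,x_{k-1},u_{k-1})\pi_{k-1}(\theta)/\sum_{\theta'}q(x_k;\theta',x_{k-1},u_{k-1})\pi_{k-1}(\theta')$, starting from a prior $\pi_0$. *)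

theory Defs
  imports "HOL-Probability.Probability"
begin

text \<open>Transition density convention: q th y x u is the density at y (= x') of x_{k+1}
  given (x_k,u_k) = (x,u) under parameter th.\<close>

fun posterior ::
  "('p \<Rightarrow> 'x \<Rightarrow> 'x \<Rightarrow> 'u \<Rightarrow> real) \<Rightarrow> 'p set \<Rightarrow> ('p \<Rightarrow> real)
    \<Rightarrow> (nat \<Rightarrow> 'x) \<Rightarrow> (nat \<Rightarrow> 'u) \<Rightarrow> nat \<Rightarrow> 'p \<Rightarrow> real" where
  "posterior q \<Theta> \<pi>0 xs us 0 = \<pi>0"
| "posterior q \<Theta> \<pi>0 xs us (Suc k) =
     (\<lambda>th. q th (xs (Suc k)) (xs k) (us k) * posterior q \<Theta> \<pi>0 xs us k th /
        (\<Sum>\<^sub>\<infinity>th'\<in>\<Theta>. q th' (xs (Suc k)) (xs k) (us k) * posterior q \<Theta> \<pi>0 xs us k th'))"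

definition qhat ::
  "('p \<Rightarrow> 'x \<Rightarrow> 'x \<Rightarrow> 'u \<Rightarrow> real) \<Rightarrow> 'p set \<Rightarrow> ('p \<Rightarrow> real)
    \<Rightarrow> (nat \<Rightarrow> 'x) \<Rightarrow> (nat \<Rightarrow> 'u) \<Rightarrow> nat \<Rightarrow> 'x \<Rightarrow> 'x \<Rightarrow> 'u \<Rightarrow> real" where
  "qhat q \<Theta> \<pi>0 xs us k y x u =
     (\<Sum>\<^sub>\<infinity>th\<in>\<Theta>. posterior q \<Theta> \<pi>0 xs us (k - 1) th * q th y x u)"

definition hist :: "(nat \<Rightarrow> 'a \<Rightarrow> 'x) \<Rightarrow> nat \<Rightarrow> 'a \<Rightarrow> (nat \<Rightarrow> 'x)" where
  "hist X k \<omega> = (\<lambda>i\<in>{..k}. X i \<omega>)"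

end

theory Submission
  imports Defs
begin

(*
  With V_n = 1 / sqrt (pi_n \<theta>s), Bayes' rule gives
  V_(n+1) = V_n * sqrt (qhat_(n+1) x_(n+1) / q \<theta>s x_(n+1)), so integrating x_(n+1) against the true
  transition density yields E [V_(n+1) | history] = V_n * BC_n, where BC_n is the Bhattacharyya
  coefficient of qhat_(n+1) and q \<theta>s. Since 2 BC + H = 2 for H = int (sqrt f - sqrt g)^2 and V_n >= 1,
  we get 2 E V_(n+1) + E H_n <= 2 E V_n; hence sum_n E H_n <= 2 / sqrt (pi_0 \<theta>s), and sum_n H_n is
  finite almost surely. All densities involved are bounded by one constant and share one Lipschitz
  constant (both follow from the derivative bound), so a gap e between qhat_(n+1) and q \<theta>s at a
  single point forces H_n >= c(e) > 0. Hence H_n --> 0 gives uniform convergence of the predictive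
  kernel, which implies both claims.
*)

section \<open>Lipschitz densities on Euclidean space\<close>

lemma emeasure_lborel_ball_eq:
  fixes c :: "'x::euclidean_space"
  assumes "r \<ge> 0"
  shows "emeasure lborel (ball c r) = ennreal (measure lborel (ball (0::'x) r))"
  using emeasure_lborel_ball_finite[of c r] content_ball_conv_unit_ball[OF assms, of c]
    content_ball_conv_unit_ball[OF assms, of "0::'x"]
  by (simp add: emeasure_eq_ennreal_measure)

lemma nn_integral_lborel_ge_ball:
  fixes f :: "'x::euclidean_space \<Rightarrow> ennreal"
  assumes "r \<ge> 0" and "\<And>y. y \<in> ball c r \<Longrightarrow> a \<le> f y"
  shows "a * measure lborel (ball (0::'x) r) \<le> (\<integral>\<^sup>+ y. f y \<partial>lborel)"
proof -
  have "a * measure lborel (ball (0::'x) r) = (\<integral>\<^sup>+ y. a * indicator (ball c r) y \<partial>lborel)"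
    using emeasure_lborel_ball_eq[OF assms(1), of c] by (simp add: nn_integral_cmult_indicator)
  also have "\<dots> \<le> (\<integral>\<^sup>+ y. f y \<partial>lborel)"
    by (intro nn_integral_mono) (auto simp: indicator_def assms(2))
  finally show ?thesis .
qed

text \<open>A Lipschitz density cannot exceed \<open>2 L\<close> at a point without staying above half that
  value on a whole unit ball.\<close>
lemma lipschitz_density_le:
  fixes f :: "'x::euclidean_space \<Rightarrow> real"
  assumes nonneg: "\<And>y. 0 \<le> f y" and lip: "L-lipschitz_on UNIV f"
    and density: "(\<integral>\<^sup>+ y. ennreal (f y) \<partial>lborel) = 1"
  shows "f y0 \<le> max (2 * L) (2 / measure lborel (ball (0::'x) 1))"
proof (rule ccontr)
  let ?B = "measure lborel (ball (0::'x) 1)"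
  have B: "?B > 0" by (rule content_ball_pos) simp
  assume "\<not> ?thesis"
  hence "f y0 > 2 * L" "2 / ?B < f y0" by auto
  hence big: "f y0 > 2 * L" "f y0 * ?B > 2"
    using pos_divide_less_eq[OF B] by auto
  have "ennreal (f y0 / 2) * ?B \<le> (\<integral>\<^sup>+ y. ennreal (f y) \<partial>lborel)"
  proof (rule nn_integral_lborel_ge_ball[of 1 y0])
    fix y assume "y \<in> ball y0 1"
    have "dist (f y0) (f y) \<le> L * dist y0 y"
      using lip by (rule lipschitz_onD) auto
    also have "\<dots> \<le> L"
      using \<open>y \<in> ball y0 1\<close> lipschitz_on_nonneg[OF lip] by (simp add: mult_left_le)
    finally have "dist (f y0) (f y) \<le> L" .
    thus "ennreal (f y0 / 2) \<le> ennreal (f y)"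
      using big(1) by (intro ennreal_leI) (simp add: dist_real_def)
  qed simp
  hence "f y0 / 2 * ?B \<le> 1"
    using density big(1) lipschitz_on_nonneg[OF lip]
    by (simp add: ennreal_mult'[symmetric] ennreal_le_1)
  with big(2) show False by simp
qed

lemma borel_measurable_lipschitz_on: "L-lipschitz_on UNIV f \<Longrightarrow> f \<in> borel_measurable borel"
  by (intro borel_measurable_continuous_onI lipschitz_on_continuous_on)

section \<open>Hellinger distance\<close>

lemma sqrt_diff_square_ge:
  fixes a b C e :: real
  assumes "0 \<le> a" "a \<le> C" "0 \<le> b" "b \<le> C" "0 \<le> e" "e \<le> \<bar>a - b\<bar>"
  shows "e\<^sup>2 / (4 * C) \<le> (sqrt a - sqrt b)\<^sup>2"
proof -
  have "a - b = (sqrt a - sqrt b) * (sqrt a + sqrt b)"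
    using assms by (simp add: algebra_simps flip: power2_eq_square)
  hence "\<bar>a - b\<bar> = \<bar>sqrt a - sqrt b\<bar> * (sqrt a + sqrt b)"
    using assms by (simp add: abs_mult)
  also have "\<dots> \<le> \<bar>sqrt a - sqrt b\<bar> * (2 * sqrt C)"
    using assms by (intro mult_left_mono add_mono[of _ "sqrt C" _ "sqrt C", simplified]) auto
  finally have "e\<^sup>2 \<le> (\<bar>sqrt a - sqrt b\<bar> * (2 * sqrt C))\<^sup>2"
    using assms by (intro power_mono) auto
  also have "\<dots> = (sqrt a - sqrt b)\<^sup>2 * (4 * C)"
    using assms by (simp add: power_mult_distrib)
  finally show ?thesis
    using assms by (cases "C = 0") (simp_all add: field_simps)
qed

text \<open>The squared Hellinger distance, without the conventional factor \<open>1/2\<close>.\<close>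
definition sq_hellinger :: "('x::euclidean_space \<Rightarrow> real) \<Rightarrow> ('x \<Rightarrow> real) \<Rightarrow> ennreal" where
  "sq_hellinger f g = (\<integral>\<^sup>+ y. ennreal ((sqrt (f y) - sqrt (g y))\<^sup>2) \<partial>lborel)"

definition bhattacharyya :: "('x::euclidean_space \<Rightarrow> real) \<Rightarrow> ('x \<Rightarrow> real) \<Rightarrow> ennreal" where
  "bhattacharyya f g = (\<integral>\<^sup>+ y. ennreal (sqrt (f y * g y)) \<partial>lborel)"

lemma bhattacharyya_sq_hellinger:
  fixes f g :: "'x::euclidean_space \<Rightarrow> real"
  assumes [measurable]: "f \<in> borel_measurable borel" "g \<in> borel_measurable borel"
    and nonneg: "\<And>y. 0 \<le> f y" "\<And>y. 0 \<le> g y"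
    and density: "(\<integral>\<^sup>+ y. ennreal (f y) \<partial>lborel) = 1" "(\<integral>\<^sup>+ y. ennreal (g y) \<partial>lborel) = 1"
  shows "2 * bhattacharyya f g + sq_hellinger f g = 2"
proof -
  have pointwise: "2 * ennreal (sqrt (f y * g y)) + ennreal ((sqrt (f y) - sqrt (g y))\<^sup>2)
      = ennreal (f y) + ennreal (g y)" for y
  proof -
    have "2 * sqrt (f y * g y) + (sqrt (f y) - sqrt (g y))\<^sup>2 = f y + g y"
      using nonneg[of y] by (simp add: power2_eq_square algebra_simps real_sqrt_mult)
    moreover have "2 * ennreal (sqrt (f y * g y)) = ennreal (2 * sqrt (f y * g y))"
      by (simp add: ennreal_mult')
    ultimately show ?thesis
      using nonneg[of y] by (simp flip: ennreal_plus)
  qed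
  have "2 * bhattacharyya f g + sq_hellinger f g
      = (\<integral>\<^sup>+ y. 2 * ennreal (sqrt (f y * g y)) + ennreal ((sqrt (f y) - sqrt (g y))\<^sup>2) \<partial>lborel)"
    unfolding bhattacharyya_def sq_hellinger_def
    by (simp add: nn_integral_add nn_integral_cmult)
  also have "\<dots> = (\<integral>\<^sup>+ y. ennreal (f y) \<partial>lborel) + (\<integral>\<^sup>+ y. ennreal (g y) \<partial>lborel)"
    by (simp add: pointwise nn_integral_add)
  finally show ?thesis
    using density by simp
qed

lemma borel_measurable_sq_hellinger:
  fixes f g :: "'a \<Rightarrow> 'x::euclidean_space \<Rightarrow> real"
  assumes "(\<lambda>z. f (fst z) (snd z)) \<in> borel_measurable (K \<Otimes>\<^sub>M borel)"
    and "(\<lambda>z. g (fst z) (snd z)) \<in> borel_measurable (K \<Otimes>\<^sub>M borel)"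
  shows "(\<lambda>h. sq_hellinger (f h) (g h)) \<in> borel_measurable K"
    and "(\<lambda>h. bhattacharyya (f h) (g h)) \<in> borel_measurable K"
proof -
  have f: "(\<lambda>(h, y). f h y) \<in> borel_measurable (K \<Otimes>\<^sub>M lborel)"
    and g: "(\<lambda>(h, y). g h y) \<in> borel_measurable (K \<Otimes>\<^sub>M lborel)"
    using assms by (simp_all add: split_beta' cong: measurable_cong_sets)
  show "(\<lambda>h. sq_hellinger (f h) (g h)) \<in> borel_measurable K"
    unfolding sq_hellinger_def using f g by measurable
  show "(\<lambda>h. bhattacharyya (f h) (g h)) \<in> borel_measurable K"
    unfolding bhattacharyya_def using f g by measurable
qed

text \<open>Two functions with a common Lipschitz constant that differ by \<open>e\<close> at one point differ
  by \<open>e/2\<close> on a ball of radius \<open>e/(4L)\<close> around it.\<close>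
lemma sq_hellinger_ge_of_gap:
  fixes f g :: "'x::euclidean_space \<Rightarrow> real"
  assumes f: "\<And>y. 0 \<le> f y" "\<And>y. f y \<le> C" and g: "\<And>y. 0 \<le> g y" "\<And>y. g y \<le> C"
    and L: "L > 0" "L-lipschitz_on UNIV f" "L-lipschitz_on UNIV g"
    and e: "e > 0" "e \<le> \<bar>f y0 - g y0\<bar>"
  shows "ennreal ((e/2)\<^sup>2 / (4 * C) * measure lborel (ball (0::'x) (e / (4 * L))))
    \<le> sq_hellinger f g"
proof -
  have C: "0 \<le> C" using f[of y0] by linarith
  have "ennreal ((e/2)\<^sup>2 / (4 * C)) * measure lborel (ball (0::'x) (e / (4 * L)))
      \<le> sq_hellinger f g"
    unfolding sq_hellinger_def
  proof (rule nn_integral_lborel_ge_ball[of _ y0])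
    show "0 \<le> e / (4 * L)" using e L by simp
    fix y assume "y \<in> ball y0 (e / (4 * L))"
    hence "L * dist y0 y \<le> e / 4"
      using L(1) by (simp add: pos_less_divide_eq algebra_simps)
    hence "e / 2 \<le> \<bar>f y - g y\<bar>"
      using lipschitz_onD[OF L(2), of y0 y] lipschitz_onD[OF L(3), of y0 y] e(2)
      by (simp add: dist_real_def abs_le_iff abs_if split: if_splits)
    hence "(e/2)\<^sup>2 / (4 * C) \<le> (sqrt (f y) - sqrt (g y))\<^sup>2"
      using e by (intro sqrt_diff_square_ge) (auto intro: f g)
    thus "ennreal ((e/2)\<^sup>2 / (4 * C)) \<le> ennreal ((sqrt (f y) - sqrt (g y))\<^sup>2)"
      by (rule ennreal_leI)
  qed
  thus ?thesis
    using C by (subst ennreal_mult) auto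
qed

lemma uniform_limit_of_sq_hellinger_tendsto_0:
  fixes f g :: "nat \<Rightarrow> 'x::euclidean_space \<Rightarrow> real"
  assumes f: "\<And>n y. 0 \<le> f n y" "\<And>n y. f n y \<le> C" and g: "\<And>n y. 0 \<le> g n y" "\<And>n y. g n y \<le> C"
    and C: "0 < C" and L: "0 < L" "\<And>n. L-lipschitz_on UNIV (f n)" "\<And>n. L-lipschitz_on UNIV (g n)"
    and lim: "(\<lambda>n. sq_hellinger (f n) (g n)) \<longlonglongrightarrow> 0"
  shows "uniform_limit UNIV (\<lambda>n y. f n y - g n y) (\<lambda>y. 0) sequentially"
  unfolding uniform_limit_iff
proof (intro allI impI)
  fix e :: real assume e: "e > 0"
  define d where "d = (e/2)\<^sup>2 / (4 * C) * measure lborel (ball (0::'x) (e / (4 * L)))"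
  have "d > 0"
    unfolding d_def using e C L by (intro mult_pos_pos divide_pos_pos content_ball_pos) auto
  hence "eventually (\<lambda>n. sq_hellinger (f n) (g n) < ennreal d) sequentially"
    using lim by (intro order_tendstoD) auto
  thus "eventually (\<lambda>n. \<forall>y\<in>UNIV. dist (f n y - g n y) 0 < e) sequentially"
  proof eventually_elim
    case (elim n)
    show ?case
    proof (intro ballI, rule ccontr)
      fix y assume "\<not> dist (f n y - g n y) 0 < e"
      hence "ennreal d \<le> sq_hellinger (f n) (g n)"
        unfolding d_def using f g L e by (intro sq_hellinger_ge_of_gap[of "f n" C "g n" _ _ y]) auto
      with elim show False by simp
    qed
  qed
qed

lemma uniform_limit_imp_tendsto_along:
  fixes f :: "nat \<Rightarrow> 'a \<Rightarrow> 'b::real_normed_vector"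
  assumes "uniform_limit UNIV f (\<lambda>_. 0) sequentially"
  shows "(\<lambda>n. f n (z n)) \<longlonglongrightarrow> 0"
proof (rule tendstoI)
  fix e :: real assume "0 < e"
  with assms have "eventually (\<lambda>n. \<forall>y\<in>UNIV. dist (f n y) 0 < e) sequentially"
    by (simp add: uniform_limit_iff)
  thus "eventually (\<lambda>n. dist (f n (z n)) 0 < e) sequentially"
    by eventually_elim simp
qed

lemma LIMSEQ_zero_of_suminf_ennreal_neq_top:
  fixes f :: "nat \<Rightarrow> ennreal"
  assumes "(\<Sum>i. f i) \<noteq> \<top>"
  shows "f \<longlonglongrightarrow> 0"
proof -
  have finite: "f i \<noteq> \<top>" for i
    using assms ennreal_suminf_lessD[of f \<top> i] by (auto simp: top.not_eq_extremum)
  hence f_eq: "f = (\<lambda>i. ennreal (enn2real (f i)))"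
    by (simp add: ennreal_enn2real_if)
  have "summable (\<lambda>i. enn2real (f i))"
    using assms by (intro summable_suminf_not_top) (simp_all flip: f_eq)
  hence "(\<lambda>i. ennreal (enn2real (f i))) \<longlonglongrightarrow> ennreal 0"
    by (intro tendsto_ennrealI summable_LIMSEQ_zero)
  thus ?thesis
    by (simp flip: f_eq)
qed

section \<open>Mixtures over countable parameter sets\<close>

definition enum_series :: "'p set \<Rightarrow> ('p \<Rightarrow> 'b::zero) \<Rightarrow> nat \<Rightarrow> 'b" where
  "enum_series A f n = (if n \<in> to_nat_on A ` A then f (from_nat_into A n) else 0)"

lemma sums_enum_series:
  assumes "countable A" "(f has_sum s) A"
  shows "enum_series A f sums s"
proof -
  have "(enum_series A f \<circ> to_nat_on A has_sum s) A"
    using assms(2) by (rule has_sum_cong[THEN iffD1, rotated]) (simp add: enum_series_def assms(1))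
  hence "(enum_series A f has_sum s) (to_nat_on A ` A)"
    using assms(1) by (simp add: has_sum_reindex inj_on_to_nat_on)
  hence "(enum_series A f has_sum s) UNIV"
    by (rule has_sum_cong_neutral[THEN iffD1, rotated -1]) (auto simp: enum_series_def)
  thus ?thesis
    by (rule has_sum_imp_sums)
qed

lemma suminf_ennreal_enum_series:
  assumes "countable A" "(f has_sum s) A" "\<And>\<theta>. \<theta> \<in> A \<Longrightarrow> 0 \<le> f \<theta>"
  shows "(\<Sum>n. ennreal (enum_series A f n)) = ennreal s"
  using assms by (intro suminf_ennreal_eq sums_enum_series) (auto simp: enum_series_def)

lemma borel_measurable_infsum_countable:
  fixes f :: "'a \<Rightarrow> 'p \<Rightarrow> real"
  assumes "countable A" and summable: "\<And>h. h \<in> space K \<Longrightarrow> f h summable_on A"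
    and meas: "\<And>p. p \<in> A \<Longrightarrow> (\<lambda>h. f h p) \<in> borel_measurable K"
  shows "(\<lambda>h. \<Sum>\<^sub>\<infinity>p\<in>A. f h p) \<in> borel_measurable K"
proof (rule borel_measurable_LIMSEQ_real)
  fix h assume "h \<in> space K"
  thus "(\<lambda>n. \<Sum>i<n. enum_series A (f h) i) \<longlonglongrightarrow> (\<Sum>\<^sub>\<infinity>p\<in>A. f h p)"
    using sums_enum_series[OF assms(1) has_sum_infsum[OF summable]] by (simp add: sums_def)
next
  have "from_nat_into A i \<in> A" if "i \<in> to_nat_on A ` A" for i
    using that by (auto simp: from_nat_into_to_nat_on assms(1))
  hence "(\<lambda>h. enum_series A (f h) i) \<in> borel_measurable K" for i
    unfolding enum_series_def using meas by (cases "i \<in> to_nat_on A ` A") auto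
  thus "(\<lambda>h. \<Sum>i<n. enum_series A (f h) i) \<in> borel_measurable K" for n
    by measurable
qed

definition prob_weights :: "'p set \<Rightarrow> ('p \<Rightarrow> real) \<Rightarrow> bool" where
  "prob_weights A p \<longleftrightarrow> (\<forall>\<theta>\<in>A. 0 \<le> p \<theta>) \<and> (p has_sum 1) A"

definition mixture :: "'p set \<Rightarrow> ('p \<Rightarrow> real) \<Rightarrow> ('p \<Rightarrow> 'y \<Rightarrow> real) \<Rightarrow> 'y \<Rightarrow> real" where
  "mixture A p f y = (\<Sum>\<^sub>\<infinity>\<theta>\<in>A. p \<theta> * f \<theta> y)"

lemma prob_weights_le_1:
  assumes "prob_weights A p" "\<theta> \<in> A"
  shows "p \<theta> \<le> 1"
proof (rule has_sum_mono2)
  show "(p has_sum p \<theta>) {\<theta>}" by (rule has_sum_finiteI) simp_all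
qed (use assms in \<open>auto simp: prob_weights_def\<close>)

context
  fixes A :: "'p set" and p :: "'p \<Rightarrow> real" and f :: "'p \<Rightarrow> 'y \<Rightarrow> real" and C :: real
  assumes weights: "prob_weights A p" and bounded: "\<And>\<theta> y. \<theta> \<in> A \<Longrightarrow> f \<theta> y \<in> {0..C}"
begin

lemma has_sum_mixture: "((\<lambda>\<theta>. p \<theta> * f \<theta> y) has_sum mixture A p f y) A"
proof -
  have "(\<lambda>\<theta>. p \<theta> * f \<theta> y) summable_on A"
  proof (rule summable_on_comparison_test)
    have "((\<lambda>\<theta>. p \<theta> * C) has_sum (1 * C)) A"
      using weights unfolding prob_weights_def by (intro has_sum_cmult_left) auto
    thus "(\<lambda>\<theta>. p \<theta> * C) summable_on A"
      by (auto simp: summable_on_def)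
    show "p \<theta> * f \<theta> y \<le> p \<theta> * C" "0 \<le> p \<theta> * f \<theta> y" if "\<theta> \<in> A" for \<theta>
      using weights bounded[OF that, of y] that unfolding prob_weights_def
      by (auto intro: mult_left_mono)
  qed
  thus ?thesis
    unfolding mixture_def by simp
qed

lemma mixture_le: "mixture A p f y \<le> C"
proof -
  have "((\<lambda>\<theta>. p \<theta> * C) has_sum (1 * C)) A"
    using weights unfolding prob_weights_def by (intro has_sum_cmult_left) auto
  thus ?thesis
    using weights bounded by (intro has_sum_mono[OF has_sum_mixture])
      (auto simp: prob_weights_def intro: mult_left_mono)
qed

lemma mixture_ge_component:
  assumes "\<theta> \<in> A"
  shows "p \<theta> * f \<theta> y \<le> mixture A p f y"
proof (rule has_sum_mono2[OF _ has_sum_mixture])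
  show "((\<lambda>\<theta>. p \<theta> * f \<theta> y) has_sum p \<theta> * f \<theta> y) {\<theta>}" by (rule has_sum_finiteI) simp_all
qed (use assms weights bounded in \<open>auto simp: prob_weights_def\<close>)

lemma mixture_nonneg: "0 \<le> mixture A p f y"
  using weights bounded by (intro has_sum_nonneg[OF has_sum_mixture]) (auto simp: prob_weights_def)

end

lemma lipschitz_on_mixture:
  fixes f :: "'p \<Rightarrow> 'y::metric_space \<Rightarrow> real"
  assumes weights: "prob_weights A p" and bounded: "\<And>\<theta> y. \<theta> \<in> A \<Longrightarrow> f \<theta> y \<in> {0..C}"
    and lip: "\<And>\<theta>. \<theta> \<in> A \<Longrightarrow> L-lipschitz_on UNIV (f \<theta>)" and "0 \<le> L"
  shows "L-lipschitz_on UNIV (mixture A p f)"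
proof (rule lipschitz_onI)
  have has_sum: "((\<lambda>\<theta>. p \<theta> * f \<theta> y) has_sum mixture A p f y) A" for y
    using weights bounded by (rule has_sum_mixture)
  have le: "mixture A p f y \<le> mixture A p f z + L * dist y z" for y z
  proof -
    have "((\<lambda>\<theta>. p \<theta> * f \<theta> z + p \<theta> * (L * dist y z)) has_sum
        (mixture A p f z + 1 * (L * dist y z))) A"
      using weights unfolding prob_weights_def
      by (intro has_sum_add has_sum has_sum_cmult_left) auto
    moreover have "p \<theta> * f \<theta> y \<le> p \<theta> * f \<theta> z + p \<theta> * (L * dist y z)" if "\<theta> \<in> A" for \<theta>
      using lipschitz_onD[OF lip[OF that], of y z] weights that
      by (auto simp: prob_weights_def dist_real_def simp flip: distrib_left intro!: mult_left_mono)
    ultimately show ?thesis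
      by (simp add: has_sum_mono[OF has_sum])
  qed
  show "dist (mixture A p f y) (mixture A p f z) \<le> L * dist y z" for y z
    using le[of y z] le[of z y] by (simp add: dist_real_def dist_commute)
qed (fact assms(4))

lemma nn_integral_mixture:
  fixes f :: "'p \<Rightarrow> 'x::euclidean_space \<Rightarrow> real"
  assumes "countable A" and weights: "prob_weights A p"
    and bounded: "\<And>\<theta> y. \<theta> \<in> A \<Longrightarrow> f \<theta> y \<in> {0..C}"
    and meas: "\<And>\<theta>. \<theta> \<in> A \<Longrightarrow> f \<theta> \<in> borel_measurable borel"
    and density: "\<And>\<theta>. \<theta> \<in> A \<Longrightarrow> (\<integral>\<^sup>+ y. ennreal (f \<theta> y) \<partial>lborel) = 1"
  shows "(\<integral>\<^sup>+ y. ennreal (mixture A p f y) \<partial>lborel) = 1"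
proof -
  let ?e = "from_nat_into A" and ?S = "to_nat_on A ` A"
  have e: "?e n \<in> A" if "n \<in> ?S" for n
    using that \<open>countable A\<close> by auto
  have nonneg: "0 \<le> p \<theta>" "0 \<le> f \<theta> y" if "\<theta> \<in> A" for \<theta> y
    using weights bounded that by (auto simp: prob_weights_def)
  have "(\<integral>\<^sup>+ y. ennreal (mixture A p f y) \<partial>lborel)
      = (\<integral>\<^sup>+ y. (\<Sum>n. ennreal (enum_series A (\<lambda>\<theta>. p \<theta> * f \<theta> y) n)) \<partial>lborel)"
  proof (rule nn_integral_cong)
    fix y
    have "0 \<le> p \<theta> * f \<theta> y" if "\<theta> \<in> A" for \<theta>
      using nonneg[OF that] by simp
    thus "ennreal (mixture A p f y) = (\<Sum>n. ennreal (enum_series A (\<lambda>\<theta>. p \<theta> * f \<theta> y) n))"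
      by (intro suminf_ennreal_enum_series[symmetric, OF \<open>countable A\<close>]
          has_sum_mixture[where f = f, OF weights bounded])
  qed
  also have "\<dots> = (\<Sum>n. \<integral>\<^sup>+ y. ennreal (enum_series A (\<lambda>\<theta>. p \<theta> * f \<theta> y) n) \<partial>lborel)"
  proof (rule nn_integral_suminf)
    fix n
    show "(\<lambda>y. ennreal (enum_series A (\<lambda>\<theta>. p \<theta> * f \<theta> y) n)) \<in> borel_measurable lborel"
      using e meas by (cases "n \<in> ?S") (auto simp: enum_series_def)
  qed
  also have "\<dots> = (\<Sum>n. ennreal (enum_series A p n))"
  proof (rule suminf_cong)
    fix n
    show "(\<integral>\<^sup>+ y. ennreal (enum_series A (\<lambda>\<theta>. p \<theta> * f \<theta> y) n) \<partial>lborel) = ennreal (enum_series A p n)"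
    proof (cases "n \<in> ?S")
      case True
      have "(\<integral>\<^sup>+ y. ennreal (p (?e n) * f (?e n) y) \<partial>lborel)
          = ennreal (p (?e n)) * (\<integral>\<^sup>+ y. ennreal (f (?e n) y) \<partial>lborel)"
        using e[OF True] nonneg meas by (simp add: ennreal_mult nn_integral_cmult)
      thus ?thesis
        using True e[OF True] density by (simp add: enum_series_def)
    qed (simp add: enum_series_def)
  qed
  also have "\<dots> = ennreal 1"
    using \<open>countable A\<close> weights unfolding prob_weights_def
    by (intro suminf_ennreal_enum_series) auto
  finally show ?thesis
    by simp
qed

section \<open>Integrating against a conditional density\<close>

lemma emeasure_distr_density_Times:
  fixes H :: "'a \<Rightarrow> 'h" and k :: "'a \<Rightarrow> 'y::euclidean_space \<Rightarrow> ennreal"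
  assumes H: "H \<in> measurable M S" and k: "(\<lambda>(\<omega>, y). k \<omega> y) \<in> borel_measurable (M \<Otimes>\<^sub>M lborel)"
    and B: "B \<in> sets S" and A: "A \<in> sets borel"
  shows "emeasure (distr (density (M \<Otimes>\<^sub>M lborel) (\<lambda>(\<omega>, y). k \<omega> y)) (S \<Otimes>\<^sub>M borel) (\<lambda>(\<omega>, y). (H \<omega>, y)))
      (B \<times> A)
    = (\<integral>\<^sup>+ \<omega>. indicator {\<omega> \<in> space M. H \<omega> \<in> B} \<omega> * (\<integral>\<^sup>+ y. indicator A y * k \<omega> y \<partial>lborel) \<partial>M)"
proof -
  let ?J = "\<lambda>(\<omega>, y). (H \<omega>, y)"
  let ?R = "?J -` (B \<times> A) \<inter> space (M \<Otimes>\<^sub>M lborel)"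
  have J: "?J \<in> measurable (M \<Otimes>\<^sub>M lborel) (S \<Otimes>\<^sub>M borel)"
    using H by measurable
  have R: "?R \<in> sets (M \<Otimes>\<^sub>M lborel)"
    using measurable_sets[OF J] A B by auto
  have "emeasure (distr (density (M \<Otimes>\<^sub>M lborel) (\<lambda>(\<omega>, y). k \<omega> y)) (S \<Otimes>\<^sub>M borel) ?J) (B \<times> A)
      = emeasure (density (M \<Otimes>\<^sub>M lborel) (\<lambda>(\<omega>, y). k \<omega> y)) ?R"
    using J A B by (subst emeasure_distr) auto
  also have "\<dots> = (\<integral>\<^sup>+ z. (\<lambda>(\<omega>, y). k \<omega> y) z * indicator ?R z \<partial>(M \<Otimes>\<^sub>M lborel))"
    using k R by (rule emeasure_density)
  also have "\<dots> = (\<integral>\<^sup>+ \<omega>. \<integral>\<^sup>+ y. k \<omega> y * indicator ?R (\<omega>, y) \<partial>lborel \<partial>M)"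
    using k R by (subst lborel.nn_integral_fst[symmetric]) (auto intro: borel_measurable_times_ennreal)
  also have "\<dots> = (\<integral>\<^sup>+ \<omega>. indicator {\<omega> \<in> space M. H \<omega> \<in> B} \<omega> * (\<integral>\<^sup>+ y. indicator A y * k \<omega> y \<partial>lborel) \<partial>M)"
  proof (rule nn_integral_cong)
    fix \<omega> assume \<omega>: "\<omega> \<in> space M"
    have "(\<lambda>y. k \<omega> y) \<in> borel_measurable lborel"
      using k \<omega> by measurable
    thus "(\<integral>\<^sup>+ y. k \<omega> y * indicator ?R (\<omega>, y) \<partial>lborel)
        = indicator {\<omega> \<in> space M. H \<omega> \<in> B} \<omega> * (\<integral>\<^sup>+ y. indicator A y * k \<omega> y \<partial>lborel)"
      using \<omega> A
      by (subst nn_integral_cmult[symmetric])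
        (auto intro!: nn_integral_cong simp: indicator_def space_pair_measure)
  qed
  finally show ?thesis .
qed

lemma distr_pair_eq_density:
  fixes H :: "'a \<Rightarrow> 'h" and Y :: "'a \<Rightarrow> 'y::euclidean_space" and k :: "'a \<Rightarrow> 'y \<Rightarrow> ennreal"
  assumes "finite_measure M"
    and H: "H \<in> measurable M S" and Y: "Y \<in> borel_measurable M"
    and k: "(\<lambda>(\<omega>, y). k \<omega> y) \<in> borel_measurable (M \<Otimes>\<^sub>M lborel)"
    and rect: "\<And>B A. B \<in> sets S \<Longrightarrow> A \<in> sets borel \<Longrightarrow>
          emeasure M {\<omega> \<in> space M. H \<omega> \<in> B \<and> Y \<omega> \<in> A} =
          (\<integral>\<^sup>+ \<omega>. indicator {\<omega> \<in> space M. H \<omega> \<in> B} \<omega> * (\<integral>\<^sup>+ y. indicator A y * k \<omega> y \<partial>lborel) \<partial>M)"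
  shows "distr M (S \<Otimes>\<^sub>M borel) (\<lambda>\<omega>. (H \<omega>, Y \<omega>))
    = distr (density (M \<Otimes>\<^sub>M lborel) (\<lambda>(\<omega>, y). k \<omega> y)) (S \<Otimes>\<^sub>M borel) (\<lambda>(\<omega>, y). (H \<omega>, y))"
    (is "distr M _ ?HY = distr ?D _ ?J")
proof -
  interpret finite_measure M by (fact assms(1))
  let ?E = "{B \<times> A | B A. B \<in> sets S \<and> A \<in> sets (borel :: 'y measure)}"
  have HY: "?HY \<in> measurable M (S \<Otimes>\<^sub>M borel)"
    using H Y by measurable
  show ?thesis
  proof (rule measure_eqI_generator_eq[OF Int_stable_pair_measure_generator[of S borel]])
    show "?E \<subseteq> Pow (space S \<times> space borel)"
      by (rule pair_measure_closed)
    show "sets (distr M (S \<Otimes>\<^sub>M borel) ?HY) = sigma_sets (space S \<times> space borel) ?E"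
      "sets (distr ?D (S \<Otimes>\<^sub>M borel) ?J) = sigma_sets (space S \<times> space borel) ?E"
      by (simp_all add: sets_pair_measure)
    show "range (\<lambda>_. space S \<times> space borel) \<subseteq> ?E"
      using sets.top[of S] sets.top[of borel] by blast
    show "(\<Union>i. space S \<times> space borel) = space S \<times> space borel"
      by simp
    show "emeasure (distr M (S \<Otimes>\<^sub>M borel) ?HY) (space S \<times> space borel) \<noteq> \<infinity>"
      by (simp add: emeasure_distr[OF HY] space_pair_measure)
  next
    fix Z assume "Z \<in> ?E"
    then obtain B A where Z: "Z = B \<times> A" and B: "B \<in> sets S" and A: "A \<in> sets (borel :: 'y measure)"
      by auto
    have "emeasure (distr M (S \<Otimes>\<^sub>M borel) ?HY) Z = emeasure M {\<omega> \<in> space M. H \<omega> \<in> B \<and> Y \<omega> \<in> A}"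
      using A B by (simp add: emeasure_distr[OF HY] Z vimage_def Int_def conj_commute)
    thus "emeasure (distr M (S \<Otimes>\<^sub>M borel) ?HY) Z = emeasure (distr ?D (S \<Otimes>\<^sub>M borel) ?J) Z"
      unfolding Z rect[OF B A] emeasure_distr_density_Times[OF H k B A] .
  qed
qed

lemma nn_integral_conditional_density:
  fixes H :: "'a \<Rightarrow> 'h" and Y :: "'a \<Rightarrow> 'y::euclidean_space" and k :: "'a \<Rightarrow> 'y \<Rightarrow> ennreal"
  assumes "finite_measure M"
    and H: "H \<in> measurable M S" and Y: "Y \<in> borel_measurable M"
    and k: "(\<lambda>(\<omega>, y). k \<omega> y) \<in> borel_measurable (M \<Otimes>\<^sub>M lborel)"
    and rect: "\<And>B A. B \<in> sets S \<Longrightarrow> A \<in> sets borel \<Longrightarrow>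
          emeasure M {\<omega> \<in> space M. H \<omega> \<in> B \<and> Y \<omega> \<in> A} =
          (\<integral>\<^sup>+ \<omega>. indicator {\<omega> \<in> space M. H \<omega> \<in> B} \<omega> * (\<integral>\<^sup>+ y. indicator A y * k \<omega> y \<partial>lborel) \<partial>M)"
    and G: "G \<in> borel_measurable (S \<Otimes>\<^sub>M borel)"
  shows "(\<integral>\<^sup>+ \<omega>. G (H \<omega>, Y \<omega>) \<partial>M) = (\<integral>\<^sup>+ \<omega>. \<integral>\<^sup>+ y. G (H \<omega>, y) * k \<omega> y \<partial>lborel \<partial>M)"
proof -
  let ?D = "density (M \<Otimes>\<^sub>M lborel) (\<lambda>(\<omega>, y). k \<omega> y)" and ?J = "\<lambda>(\<omega>, y). (H \<omega>, y)"
  have HY: "(\<lambda>\<omega>. (H \<omega>, Y \<omega>)) \<in> measurable M (S \<Otimes>\<^sub>M borel)"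
    using H Y by measurable
  have J: "?J \<in> measurable (M \<Otimes>\<^sub>M lborel) (S \<Otimes>\<^sub>M borel)"
    using H by measurable
  have "(\<integral>\<^sup>+ \<omega>. G (H \<omega>, Y \<omega>) \<partial>M) = (\<integral>\<^sup>+ z. G z \<partial>distr M (S \<Otimes>\<^sub>M borel) (\<lambda>\<omega>. (H \<omega>, Y \<omega>)))"
    using G HY by (simp add: nn_integral_distr)
  also have "\<dots> = (\<integral>\<^sup>+ z. G z \<partial>distr ?D (S \<Otimes>\<^sub>M borel) ?J)"
    by (simp only: distr_pair_eq_density[OF assms(1-5)])
  also have "\<dots> = (\<integral>\<^sup>+ z. G (?J z) \<partial>?D)"
    using G J by (intro nn_integral_distr) simp_all
  also have "\<dots> = (\<integral>\<^sup>+ z. (\<lambda>(\<omega>, y). k \<omega> y) z * G (?J z) \<partial>(M \<Otimes>\<^sub>M lborel))"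
    using measurable_compose[OF J G] k by (rule nn_integral_density[rotated])
  also have "\<dots> = (\<integral>\<^sup>+ \<omega>. \<integral>\<^sup>+ y. G (H \<omega>, y) * k \<omega> y \<partial>lborel \<partial>M)"
    using measurable_compose[OF J G] k
    by (subst lborel.nn_integral_fst[symmetric]) (auto simp: case_prod_beta mult.commute)
  finally show ?thesis .
qed

section \<open>The Bayesian filter\<close>

lemma posterior_cong:
  assumes "\<And>i. i \<le> n \<Longrightarrow> xs i = xs' i" and "\<And>i. i < n \<Longrightarrow> us i = us' i"
  shows "posterior q \<Theta> \<pi>0 xs us n = posterior q \<Theta> \<pi>0 xs' us' n"
  using assms by (induction n) auto

locale bayes_posterior =
  fixes q :: "'p \<Rightarrow> 'x \<Rightarrow> 'x \<Rightarrow> 'u \<Rightarrow> real" and \<Theta> :: "'p set" and \<pi>0 :: "'p \<Rightarrow> real"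
    and \<theta>s :: 'p and C :: real
  assumes true_param: "\<theta>s \<in> \<Theta>"
    and q_pos: "\<And>\<theta> y x u. \<theta> \<in> \<Theta> \<Longrightarrow> 0 < q \<theta> y x u"
    and q_le: "\<And>\<theta> y x u. \<theta> \<in> \<Theta> \<Longrightarrow> q \<theta> y x u \<le> C"
    and prior: "prob_weights \<Theta> \<pi>0"
    and prior_true: "0 < \<pi>0 \<theta>s"
begin

definition predictive :: "('p \<Rightarrow> real) \<Rightarrow> 'x \<Rightarrow> 'u \<Rightarrow> 'x \<Rightarrow> real" where
  "predictive p x u = mixture \<Theta> p (\<lambda>\<theta> y. q \<theta> y x u)"

lemma q_bounded: "\<theta> \<in> \<Theta> \<Longrightarrow> q \<theta> y x u \<in> {0..C}"
  using q_pos[of \<theta> y x u] q_le[of \<theta> y x u] by simp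

lemma C_pos: "0 < C"
  using q_pos[OF true_param] q_le[OF true_param] by (rule less_le_trans)

lemma qhat_Suc: "qhat q \<Theta> \<pi>0 xs us (Suc k) y x u = predictive (posterior q \<Theta> \<pi>0 xs us k) x u y"
  by (simp add: qhat_def predictive_def mixture_def)

lemma posterior_Suc_eq_predictive:
  "posterior q \<Theta> \<pi>0 xs us (Suc k) \<theta> = q \<theta> (xs (Suc k)) (xs k) (us k) * posterior q \<Theta> \<pi>0 xs us k \<theta>
     / predictive (posterior q \<Theta> \<pi>0 xs us k) (xs k) (us k) (xs (Suc k))"
  by (simp add: predictive_def mixture_def mult.commute)

lemma has_sum_predictive:
  "prob_weights \<Theta> p \<Longrightarrow> ((\<lambda>\<theta>. p \<theta> * q \<theta> y x u) has_sum predictive p x u y) \<Theta>"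
  unfolding predictive_def by (rule has_sum_mixture[where f = "\<lambda>\<theta> y. q \<theta> y x u", OF _ q_bounded])

lemma predictive_pos:
  assumes "prob_weights \<Theta> p" "0 < p \<theta>s"
  shows "0 < predictive p x u y"
proof -
  have "0 < p \<theta>s * q \<theta>s y x u"
    using assms q_pos[OF true_param] by simp
  also have "\<dots> \<le> predictive p x u y"
    unfolding predictive_def
    by (rule mixture_ge_component[where f = "\<lambda>\<theta> y. q \<theta> y x u", OF assms(1) q_bounded true_param])
  finally show ?thesis .
qed

lemma predictive_bounded: "prob_weights \<Theta> p \<Longrightarrow> predictive p x u y \<in> {0..C}"
  unfolding predictive_def
  using mixture_nonneg[where f = "\<lambda>\<theta> y. q \<theta> y x u", OF _ q_bounded]
    mixture_le[where f = "\<lambda>\<theta> y. q \<theta> y x u", OF _ q_bounded]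
  by simp

lemma posterior_prob_weights:
  "prob_weights \<Theta> (posterior q \<Theta> \<pi>0 xs us n) \<and> 0 < posterior q \<Theta> \<pi>0 xs us n \<theta>s"
proof (induction n)
  case 0
  show ?case using prior prior_true by simp
next
  case (Suc n)
  let ?p = "posterior q \<Theta> \<pi>0 xs us n" and ?x = "xs n" and ?u = "us n" and ?y = "xs (Suc n)"
  have pos: "0 < predictive ?p ?x ?u ?y"
    using Suc.IH by (intro predictive_pos) auto
  have "((\<lambda>\<theta>. ?p \<theta> * q \<theta> ?y ?x ?u) has_sum predictive ?p ?x ?u ?y) \<Theta>"
    using Suc.IH by (intro has_sum_predictive) simp
  hence "((\<lambda>\<theta>. ?p \<theta> * q \<theta> ?y ?x ?u * (1 / predictive ?p ?x ?u ?y))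
      has_sum (predictive ?p ?x ?u ?y * (1 / predictive ?p ?x ?u ?y))) \<Theta>"
    by (rule has_sum_cmult_left)
  hence "((\<lambda>\<theta>. q \<theta> ?y ?x ?u * ?p \<theta> / predictive ?p ?x ?u ?y) has_sum 1) \<Theta>"
    using pos by (simp add: mult.commute)
  moreover have "0 \<le> q \<theta> ?y ?x ?u * ?p \<theta> / predictive ?p ?x ?u ?y" if "\<theta> \<in> \<Theta>" for \<theta>
    using Suc.IH q_pos[OF that] pos that
    by (intro divide_nonneg_pos mult_nonneg_nonneg) (auto simp: prob_weights_def less_imp_le)
  moreover have "posterior q \<Theta> \<pi>0 xs us (Suc n) = (\<lambda>\<theta>. q \<theta> ?y ?x ?u * ?p \<theta> / predictive ?p ?x ?u ?y)"
    by (rule ext) (rule posterior_Suc_eq_predictive)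
  ultimately show ?case
    using Suc.IH q_pos[OF true_param] pos by (simp add: prob_weights_def)
qed

end

locale bayesian_model = bayes_posterior q \<Theta> \<pi>0 \<theta>s C
  for q :: "'p \<Rightarrow> 'x::euclidean_space \<Rightarrow> 'x \<Rightarrow> 'u \<Rightarrow> real" and \<Theta> \<pi>0 \<theta>s C +
  fixes M :: "'a measure" and N :: "'u measure" and X :: "nat \<Rightarrow> 'a \<Rightarrow> 'x" and U :: "nat \<Rightarrow> 'a \<Rightarrow> 'u"
    and pol :: "nat \<Rightarrow> (nat \<Rightarrow> 'x) \<Rightarrow> 'u" and L :: real
  assumes prob_space: "prob_space M" and countable_params: "countable \<Theta>"
    and X_meas: "\<And>k. X k \<in> borel_measurable M"
    and pol_meas: "\<And>k. pol k \<in> measurable (PiM {..k} (\<lambda>_. borel)) N"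
    and U_def: "\<And>k \<omega>. \<omega> \<in> space M \<Longrightarrow> U k \<omega> = pol k (hist X k \<omega>)"
    and q_meas: "\<And>\<theta>. \<theta> \<in> \<Theta> \<Longrightarrow>
          (\<lambda>(y, x, u). q \<theta> y x u) \<in> borel_measurable (borel \<Otimes>\<^sub>M borel \<Otimes>\<^sub>M N)"
    and q_lipschitz: "\<And>\<theta> x u. \<theta> \<in> \<Theta> \<Longrightarrow> L-lipschitz_on UNIV (\<lambda>y. q \<theta> y x u)"
    and L_pos: "0 < L"
    and q_density: "\<And>\<theta> x u. \<theta> \<in> \<Theta> \<Longrightarrow> (\<integral>\<^sup>+ y. ennreal (q \<theta> y x u) \<partial>lborel) = 1"
    and transition: "\<And>k B A. B \<in> sets (PiM {..k} (\<lambda>_. borel)) \<Longrightarrow> A \<in> sets borel \<Longrightarrow>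
          emeasure M {\<omega> \<in> space M. hist X k \<omega> \<in> B \<and> X (Suc k) \<omega> \<in> A} =
          (\<integral>\<^sup>+ \<omega>. indicator {\<omega> \<in> space M. hist X k \<omega> \<in> B} \<omega> *
              (\<integral>\<^sup>+ y. indicator A y * ennreal (q \<theta>s y (X k \<omega>) (U k \<omega>)) \<partial>lborel) \<partial>M)"
begin

text \<open>Everything the filter computes up to time \<open>n\<close> is expressed as a function of the observed
  history \<open>h = (x\<^sub>0, \<dots>, x\<^sub>n)\<close>, the controls being recovered through \<open>pol\<close>. This makes
  measurability with respect to the past, which the transition hypothesis refers to, explicit.\<close>

abbreviation hist_space :: "nat \<Rightarrow> (nat \<Rightarrow> 'x) measure" where
  "hist_space k \<equiv> PiM {..k} (\<lambda>_. borel)"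

definition hist_controls :: "(nat \<Rightarrow> 'x) \<Rightarrow> nat \<Rightarrow> 'u" where
  "hist_controls h i = pol i (restrict h {..i})"

definition hist_posterior :: "nat \<Rightarrow> (nat \<Rightarrow> 'x) \<Rightarrow> 'p \<Rightarrow> real" where
  "hist_posterior n h = posterior q \<Theta> \<pi>0 h (hist_controls h) n"

definition hist_predictive :: "nat \<Rightarrow> (nat \<Rightarrow> 'x) \<Rightarrow> 'x \<Rightarrow> real" where
  "hist_predictive n h = predictive (hist_posterior n h) (h n) (hist_controls h n)"

definition hist_likelihood :: "nat \<Rightarrow> (nat \<Rightarrow> 'x) \<Rightarrow> 'x \<Rightarrow> real" where
  "hist_likelihood n h y = q \<theta>s y (h n) (hist_controls h n)"

definition lyapunov :: "nat \<Rightarrow> (nat \<Rightarrow> 'x) \<Rightarrow> ennreal" where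
  "lyapunov n h = ennreal (1 / sqrt (hist_posterior n h \<theta>s))"

lemma hist_controls_cong: "(\<And>j. j \<le> i \<Longrightarrow> h j = h' j) \<Longrightarrow> hist_controls h i = hist_controls h' i"
  unfolding hist_controls_def by (metis atMost_iff restrict_ext)

lemma hist_posterior_cong: "(\<And>i. i \<le> n \<Longrightarrow> h i = h' i) \<Longrightarrow> hist_posterior n h = hist_posterior n h'"
  unfolding hist_posterior_def by (intro posterior_cong hist_controls_cong) auto

lemma hist_apply: "i \<le> k \<Longrightarrow> hist X k \<omega> i = X i \<omega>"
  by (simp add: hist_def)

lemma hist_controls_hist:
  assumes "\<omega> \<in> space M" "i \<le> k"
  shows "hist_controls (hist X k \<omega>) i = U i \<omega>"
  using assms U_def by (simp add: hist_controls_def hist_def)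

lemma qhat_Suc_hist:
  assumes "\<omega> \<in> space M"
  shows "qhat q \<Theta> \<pi>0 (\<lambda>i. X i \<omega>) (\<lambda>i. U i \<omega>) (Suc n) y (X n \<omega>) (U n \<omega>)
      = hist_predictive n (hist X n \<omega>) y"
proof -
  have "posterior q \<Theta> \<pi>0 (\<lambda>i. X i \<omega>) (\<lambda>i. U i \<omega>) n = hist_posterior n (hist X n \<omega>)"
    unfolding hist_posterior_def using assms by (intro posterior_cong) (auto simp: hist_controls_hist hist_apply)
  thus ?thesis
    using assms by (simp add: qhat_Suc hist_predictive_def hist_controls_hist hist_apply)
qed

lemma q_hist_likelihood:
  "\<omega> \<in> space M \<Longrightarrow> q \<theta>s y (X n \<omega>) (U n \<omega>) = hist_likelihood n (hist X n \<omega>) y"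
  by (simp add: hist_likelihood_def hist_controls_hist hist_apply)

lemma hist_Suc: "hist X (Suc n) \<omega> = (hist X n \<omega>)(Suc n := X (Suc n) \<omega>)"
  by (auto simp: hist_def)

lemma hist_posterior_weights: "prob_weights \<Theta> (hist_posterior n h)" "0 < hist_posterior n h \<theta>s"
  using posterior_prob_weights unfolding hist_posterior_def by blast+

lemma hist_posterior_Suc:
  "hist_posterior (Suc n) h \<theta> = q \<theta> (h (Suc n)) (h n) (hist_controls h n) * hist_posterior n h \<theta>
     / hist_predictive n h (h (Suc n))"
  unfolding hist_posterior_def hist_predictive_def by (rule posterior_Suc_eq_predictive)

lemma lyapunov_fun_upd:
  "lyapunov (Suc n) (h(Suc n := y)) = lyapunov n h * sqrt (hist_predictive n h y / hist_likelihood n h y)"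
proof -
  let ?h = "h(Suc n := y)"
  have agree: "hist_posterior n ?h = hist_posterior n h" "hist_controls ?h n = hist_controls h n"
    by (auto intro: hist_posterior_cong hist_controls_cong)
  have "hist_predictive n ?h = hist_predictive n h" "hist_likelihood n ?h = hist_likelihood n h"
    using agree by (auto simp: hist_predictive_def hist_likelihood_def)
  hence post: "hist_posterior (Suc n) ?h \<theta>s
      = hist_likelihood n h y * hist_posterior n h \<theta>s / hist_predictive n h y"
    using agree by (simp add: hist_posterior_Suc hist_likelihood_def)
  have pos: "0 < hist_likelihood n h y" "0 < hist_posterior n h \<theta>s" "0 < hist_predictive n h y"
    using hist_posterior_weights q_pos[OF true_param]
    by (auto simp: hist_likelihood_def hist_predictive_def intro: predictive_pos)
  hence "1 / sqrt (hist_posterior (Suc n) ?h \<theta>s)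
      = 1 / sqrt (hist_posterior n h \<theta>s) * sqrt (hist_predictive n h y / hist_likelihood n h y)"
    unfolding post by (simp add: real_sqrt_divide real_sqrt_mult)
  thus ?thesis
    unfolding lyapunov_def using pos by (simp only:) (rule ennreal_mult; simp)
qed

lemma lyapunov_fun_upd_mult_likelihood:
  "lyapunov (Suc n) (h(Suc n := y)) * hist_likelihood n h y
    = lyapunov n h * sqrt (hist_predictive n h y * hist_likelihood n h y)"
proof -
  have pos: "0 < hist_likelihood n h y" "0 < hist_predictive n h y"
    using hist_posterior_weights q_pos[OF true_param]
    by (auto simp: hist_likelihood_def hist_predictive_def intro: predictive_pos)
  hence "sqrt (hist_predictive n h y / hist_likelihood n h y) * hist_likelihood n h y
      = sqrt (hist_predictive n h y * hist_likelihood n h y)"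
    by (simp add: real_sqrt_divide real_sqrt_mult field_simps)
  hence "ennreal (sqrt (hist_predictive n h y / hist_likelihood n h y)) * hist_likelihood n h y
      = sqrt (hist_predictive n h y * hist_likelihood n h y)"
    using pos by (subst ennreal_mult'[symmetric]) simp_all
  thus ?thesis
    by (simp add: lyapunov_fun_upd mult.assoc)
qed

lemma lyapunov_ge_1: "1 \<le> lyapunov n h"
proof -
  have "0 < hist_posterior n h \<theta>s" "hist_posterior n h \<theta>s \<le> 1"
    using hist_posterior_weights prob_weights_le_1[OF hist_posterior_weights(1) true_param] by auto
  thus ?thesis
    by (simp add: lyapunov_def ennreal_ge_1 le_divide_eq_1)
qed

lemma measurable_q:
  assumes "\<theta> \<in> \<Theta>" and "(\<lambda>h. (y h, x h, u h)) \<in> measurable K (borel \<Otimes>\<^sub>M borel \<Otimes>\<^sub>M N)"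
  shows "(\<lambda>h. q \<theta> (y h) (x h) (u h)) \<in> borel_measurable K"
  using measurable_comp[OF assms(2) q_meas[OF assms(1)]] by (simp add: comp_def)

lemma measurable_predictive:
  assumes "\<And>h. prob_weights \<Theta> (p h)"
    and "\<And>\<theta>. \<theta> \<in> \<Theta> \<Longrightarrow> (\<lambda>h. p h \<theta>) \<in> borel_measurable K"
    and "(\<lambda>h. (y h, x h, u h)) \<in> measurable K (borel \<Otimes>\<^sub>M borel \<Otimes>\<^sub>M N)"
  shows "(\<lambda>h. predictive (p h) (x h) (u h) (y h)) \<in> borel_measurable K"
  unfolding predictive_def mixture_def
proof (rule borel_measurable_infsum_countable[OF countable_params])
  show "(\<lambda>\<theta>. p h \<theta> * q \<theta> (y h) (x h) (u h)) summable_on \<Theta>" for h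
    unfolding summable_on_def by (rule exI, rule has_sum_predictive[OF assms(1)])
  show "(\<lambda>h. p h \<theta> * q \<theta> (y h) (x h) (u h)) \<in> borel_measurable K" if "\<theta> \<in> \<Theta>" for \<theta>
    using assms(2)[OF that] measurable_q[OF that assms(3)] by measurable
qed

lemma measurable_hist_controls: "i \<le> k \<Longrightarrow> (\<lambda>h. hist_controls h i) \<in> measurable (hist_space k) N"
  unfolding hist_controls_def
  using measurable_comp[OF measurable_restrict_subset[of "{..i}" "{..k}"] pol_meas[of i]]
  by (simp add: comp_def)

lemma measurable_hist_posterior:
  "n \<le> k \<Longrightarrow> \<theta> \<in> \<Theta> \<Longrightarrow> (\<lambda>h. hist_posterior n h \<theta>) \<in> borel_measurable (hist_space k)"
proof (induction n arbitrary: \<theta>)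
  case 0
  thus ?case by (simp add: hist_posterior_def)
next
  case (Suc n)
  have args: "(\<lambda>h. (h (Suc n), h n, hist_controls h n)) \<in> measurable (hist_space k) (borel \<Otimes>\<^sub>M borel \<Otimes>\<^sub>M N)"
    using Suc.prems by (intro measurable_Pair measurable_hist_controls measurable_component_singleton) auto
  have "(\<lambda>h. hist_predictive n h (h (Suc n))) \<in> borel_measurable (hist_space k)"
    unfolding hist_predictive_def
    by (rule measurable_predictive[OF hist_posterior_weights(1) _ args]) (use Suc in auto)
  thus ?case
    using Suc measurable_q[OF Suc.prems(2) args] by (simp add: hist_posterior_Suc)
qed

lemma measurable_lyapunov[measurable]: "lyapunov n \<in> borel_measurable (hist_space n)"
  unfolding lyapunov_def[abs_def] using measurable_hist_posterior[OF order_refl true_param] by measurable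

lemma measurable_hist_densities:
  "(\<lambda>z. hist_predictive n (fst z) (snd z)) \<in> borel_measurable (hist_space n \<Otimes>\<^sub>M borel)"
  "(\<lambda>z. hist_likelihood n (fst z) (snd z)) \<in> borel_measurable (hist_space n \<Otimes>\<^sub>M borel)"
proof -
  have args: "(\<lambda>z. (snd z, fst z n, hist_controls (fst z) n))
      \<in> measurable (hist_space n \<Otimes>\<^sub>M borel) (borel \<Otimes>\<^sub>M borel \<Otimes>\<^sub>M N)"
    using measurable_compose[OF measurable_fst measurable_hist_controls[of n n]]
      measurable_compose[OF measurable_fst measurable_component_singleton[of n "{..n}"]]
    by (intro measurable_Pair) auto
  show "(\<lambda>z. hist_predictive n (fst z) (snd z)) \<in> borel_measurable (hist_space n \<Otimes>\<^sub>M borel)"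
    unfolding hist_predictive_def
    using measurable_compose[OF measurable_fst measurable_hist_posterior[OF order_refl]]
    by (intro measurable_predictive[OF hist_posterior_weights(1) _ args]) auto
  show "(\<lambda>z. hist_likelihood n (fst z) (snd z)) \<in> borel_measurable (hist_space n \<Otimes>\<^sub>M borel)"
    unfolding hist_likelihood_def using true_param args by (rule measurable_q)
qed

lemma lipschitz_predictive: "prob_weights \<Theta> p \<Longrightarrow> L-lipschitz_on UNIV (predictive p x u)"
  unfolding predictive_def using L_pos
  by (intro lipschitz_on_mixture[where f = "\<lambda>\<theta> y. q \<theta> y x u", OF _ q_bounded q_lipschitz]) auto

lemma nn_integral_predictive:
  "prob_weights \<Theta> p \<Longrightarrow> (\<integral>\<^sup>+ y. ennreal (predictive p x u y) \<partial>lborel) = 1"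
  unfolding predictive_def
  by (rule nn_integral_mixture[where f = "\<lambda>\<theta> y. q \<theta> y x u", OF countable_params _ q_bounded])
    (auto intro: borel_measurable_lipschitz_on q_lipschitz q_density)

lemma hist_densities:
  "hist_predictive n h y \<in> {0..C}" "L-lipschitz_on UNIV (hist_predictive n h)"
  "hist_predictive n h \<in> borel_measurable borel" "(\<integral>\<^sup>+ y. ennreal (hist_predictive n h y) \<partial>lborel) = 1"
  "hist_likelihood n h y \<in> {0..C}" "L-lipschitz_on UNIV (hist_likelihood n h)"
  "hist_likelihood n h \<in> borel_measurable borel" "(\<integral>\<^sup>+ y. ennreal (hist_likelihood n h y) \<partial>lborel) = 1"
proof -
  note weights = hist_posterior_weights(1)[of n h]
  show "hist_predictive n h y \<in> {0..C}"
    unfolding hist_predictive_def using weights by (rule predictive_bounded)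
  show lip: "L-lipschitz_on UNIV (hist_predictive n h)"
    unfolding hist_predictive_def using weights by (rule lipschitz_predictive)
  show "hist_predictive n h \<in> borel_measurable borel"
    using lip by (rule borel_measurable_lipschitz_on)
  show "(\<integral>\<^sup>+ y. ennreal (hist_predictive n h y) \<partial>lborel) = 1"
    unfolding hist_predictive_def using weights by (rule nn_integral_predictive)
  show "hist_likelihood n h y \<in> {0..C}"
    unfolding hist_likelihood_def using true_param by (rule q_bounded)
  show lip: "L-lipschitz_on UNIV (hist_likelihood n h)"
    unfolding hist_likelihood_def[abs_def] using true_param by (rule q_lipschitz)
  show "hist_likelihood n h \<in> borel_measurable borel"
    using lip by (rule borel_measurable_lipschitz_on)
  show "(\<integral>\<^sup>+ y. ennreal (hist_likelihood n h y) \<partial>lborel) = 1"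
    unfolding hist_likelihood_def using true_param by (rule q_density)
qed

definition hist_hellinger :: "nat \<Rightarrow> (nat \<Rightarrow> 'x) \<Rightarrow> ennreal" where
  "hist_hellinger n h = sq_hellinger (hist_predictive n h) (hist_likelihood n h)"

lemma measurable_hist [measurable]: "hist X k \<in> measurable M (hist_space k)"
  unfolding hist_def by (intro measurable_restrict X_meas)

lemma measurable_U: "U k \<in> measurable M N"
proof -
  have "(\<lambda>\<omega>. pol k (hist X k \<omega>)) \<in> measurable M N"
    using measurable_comp[OF measurable_hist pol_meas] by (simp add: comp_def)
  thus ?thesis
    using U_def by (subst measurable_cong) auto
qed

lemma measurable_transition_density:
  "(\<lambda>(\<omega>, y). ennreal (q \<theta>s y (X n \<omega>) (U n \<omega>))) \<in> borel_measurable (M \<Otimes>\<^sub>M lborel)"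
  using measurable_q[OF true_param, of "\<lambda>z. snd z" "\<lambda>z. X n (fst z)" "\<lambda>z. U n (fst z)"]
    X_meas measurable_U by (simp add: case_prod_beta')

lemma measurable_hist_hellinger [measurable]: "hist_hellinger n \<in> borel_measurable (hist_space n)"
  unfolding hist_hellinger_def[abs_def] using measurable_hist_densities by (rule borel_measurable_sq_hellinger)

lemma nn_integral_lyapunov_Suc:
  "(\<integral>\<^sup>+ \<omega>. lyapunov (Suc n) (hist X (Suc n) \<omega>) \<partial>M)
    = (\<integral>\<^sup>+ \<omega>. lyapunov n (hist X n \<omega>)
        * bhattacharyya (hist_predictive n (hist X n \<omega>)) (hist_likelihood n (hist X n \<omega>)) \<partial>M)"
proof -
  \<comment> \<open>\<open>V\<^sub>n\<^sub>+\<^sub>1\<close> as a function of the past history and the next state, to which the transition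
    density applies\<close>
  define G where "G z = lyapunov (Suc n) ((fst z)(Suc n := snd z))" for z :: "(nat \<Rightarrow> 'x) \<times> 'x"
  have "G \<in> borel_measurable (hist_space n \<Otimes>\<^sub>M borel)"
    using measurable_compose[OF measurable_add_dim[of "Suc n" "{..n}" "\<lambda>_. borel"]
        measurable_lyapunov[of "Suc n", unfolded atMost_Suc]]
    by (simp add: G_def[abs_def] case_prod_beta')
  hence "(\<integral>\<^sup>+ \<omega>. G (hist X n \<omega>, X (Suc n) \<omega>) \<partial>M)
      = (\<integral>\<^sup>+ \<omega>. \<integral>\<^sup>+ y. G (hist X n \<omega>, y) * ennreal (q \<theta>s y (X n \<omega>) (U n \<omega>)) \<partial>lborel \<partial>M)"
    using prob_space.axioms(1)[OF prob_space] measurable_hist X_meas measurable_transition_density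
      transition
    by (intro nn_integral_conditional_density) auto
  also have "\<dots> = (\<integral>\<^sup>+ \<omega>. lyapunov n (hist X n \<omega>)
        * bhattacharyya (hist_predictive n (hist X n \<omega>)) (hist_likelihood n (hist X n \<omega>)) \<partial>M)"
  proof (rule nn_integral_cong)
    fix \<omega> assume \<omega>: "\<omega> \<in> space M"
    let ?f = "hist_predictive n (hist X n \<omega>)" and ?g = "hist_likelihood n (hist X n \<omega>)"
    have "G (hist X n \<omega>, y) * ennreal (q \<theta>s y (X n \<omega>) (U n \<omega>))
        = lyapunov n (hist X n \<omega>) * ennreal (sqrt (?f y * ?g y))" for y
      using \<omega> by (simp add: G_def lyapunov_fun_upd_mult_likelihood q_hist_likelihood)
    thus "(\<integral>\<^sup>+ y. G (hist X n \<omega>, y) * ennreal (q \<theta>s y (X n \<omega>) (U n \<omega>)) \<partial>lborel)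
        = lyapunov n (hist X n \<omega>) * bhattacharyya ?f ?g"
      unfolding bhattacharyya_def using hist_densities(3,7)
      by (simp add: nn_integral_cmult)
  qed
  finally show ?thesis
    by (simp add: G_def hist_Suc)
qed

lemma lyapunov_contraction:
  "2 * (lyapunov n h * bhattacharyya (hist_predictive n h) (hist_likelihood n h)) + hist_hellinger n h
    \<le> 2 * lyapunov n h"
proof -
  have "hist_hellinger n h \<le> lyapunov n h * hist_hellinger n h"
    using mult_right_mono[OF lyapunov_ge_1, of "hist_hellinger n h"] by simp
  hence "2 * (lyapunov n h * bhattacharyya (hist_predictive n h) (hist_likelihood n h)) + hist_hellinger n h
      \<le> lyapunov n h * (2 * bhattacharyya (hist_predictive n h) (hist_likelihood n h) + hist_hellinger n h)"
    by (simp add: algebra_simps)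
  also have "\<dots> = 2 * lyapunov n h"
    unfolding hist_hellinger_def using hist_densities
    by (subst bhattacharyya_sq_hellinger) (auto simp: mult.commute)
  finally show ?thesis .
qed

lemma lyapunov_descent:
  "2 * (\<integral>\<^sup>+ \<omega>. lyapunov (Suc n) (hist X (Suc n) \<omega>) \<partial>M) + (\<integral>\<^sup>+ \<omega>. hist_hellinger n (hist X n \<omega>) \<partial>M)
    \<le> 2 * (\<integral>\<^sup>+ \<omega>. lyapunov n (hist X n \<omega>) \<partial>M)"
proof -
  have [measurable]: "(\<lambda>h. bhattacharyya (hist_predictive n h) (hist_likelihood n h)) \<in> borel_measurable (hist_space n)"
    using measurable_hist_densities by (rule borel_measurable_sq_hellinger)
  show ?thesis
    unfolding nn_integral_lyapunov_Suc
    using lyapunov_contraction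
    by (simp add: nn_integral_cmult[symmetric] nn_integral_add[symmetric] nn_integral_mono)
qed

lemma nn_integral_lyapunov_0: "(\<integral>\<^sup>+ \<omega>. lyapunov 0 (hist X 0 \<omega>) \<partial>M) = ennreal (1 / sqrt (\<pi>0 \<theta>s))"
  using prob_space.emeasure_space_1[OF prob_space] by (simp add: lyapunov_def hist_posterior_def)

lemma sum_nn_integral_hist_hellinger_le:
  "(\<Sum>i<n. \<integral>\<^sup>+ \<omega>. hist_hellinger i (hist X i \<omega>) \<partial>M) \<le> 2 * ennreal (1 / sqrt (\<pi>0 \<theta>s))"
proof -
  have "2 * (\<integral>\<^sup>+ \<omega>. lyapunov n (hist X n \<omega>) \<partial>M) + (\<Sum>i<n. \<integral>\<^sup>+ \<omega>. hist_hellinger i (hist X i \<omega>) \<partial>M)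
      \<le> 2 * ennreal (1 / sqrt (\<pi>0 \<theta>s))"
  proof (induction n)
    case 0
    thus ?case by (simp add: nn_integral_lyapunov_0)
  next
    case (Suc n)
    let ?S = "\<Sum>i<n. \<integral>\<^sup>+ \<omega>. hist_hellinger i (hist X i \<omega>) \<partial>M"
    have "2 * (\<integral>\<^sup>+ \<omega>. lyapunov (Suc n) (hist X (Suc n) \<omega>) \<partial>M)
        + (\<Sum>i<Suc n. \<integral>\<^sup>+ \<omega>. hist_hellinger i (hist X i \<omega>) \<partial>M)
        = (2 * (\<integral>\<^sup>+ \<omega>. lyapunov (Suc n) (hist X (Suc n) \<omega>) \<partial>M)
          + (\<integral>\<^sup>+ \<omega>. hist_hellinger n (hist X n \<omega>) \<partial>M)) + ?S"
      by (simp add: algebra_simps)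
    also have "\<dots> \<le> 2 * (\<integral>\<^sup>+ \<omega>. lyapunov n (hist X n \<omega>) \<partial>M) + ?S"
      by (rule add_right_mono[OF lyapunov_descent])
    also have "\<dots> \<le> 2 * ennreal (1 / sqrt (\<pi>0 \<theta>s))"
      by (rule Suc.IH)
    finally show ?case .
  qed
  thus ?thesis
    by (rule order_trans[rotated]) simp
qed

lemma AE_suminf_hist_hellinger_finite: "AE \<omega> in M. (\<Sum>n. hist_hellinger n (hist X n \<omega>)) \<noteq> \<top>"
proof (rule nn_integral_PInf_AE[unfolded infinity_ennreal_def])
  show "(\<lambda>\<omega>. \<Sum>n. hist_hellinger n (hist X n \<omega>)) \<in> borel_measurable M"
    by measurable
  have "(\<integral>\<^sup>+ \<omega>. (\<Sum>n. hist_hellinger n (hist X n \<omega>)) \<partial>M) = (\<Sum>n. \<integral>\<^sup>+ \<omega>. hist_hellinger n (hist X n \<omega>) \<partial>M)"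
    by (rule nn_integral_suminf) measurable
  also have "\<dots> \<le> 2 * ennreal (1 / sqrt (\<pi>0 \<theta>s))"
    by (intro suminf_le_const sum_nn_integral_hist_hellinger_le) simp
  also have "\<dots> < \<top>"
    by (simp add: ennreal_mult_less_top)
  finally show "(\<integral>\<^sup>+ \<omega>. (\<Sum>n. hist_hellinger n (hist X n \<omega>)) \<partial>M) \<noteq> \<top>"
    by simp
qed

lemma AE_uniform_limit_hist_predictive:
  "AE \<omega> in M. uniform_limit UNIV
     (\<lambda>n y. hist_predictive n (hist X n \<omega>) y - hist_likelihood n (hist X n \<omega>) y) (\<lambda>y. 0) sequentially"
proof (rule AE_mp[OF AE_suminf_hist_hellinger_finite], intro AE_I2 impI)
  fix \<omega> assume "(\<Sum>n. hist_hellinger n (hist X n \<omega>)) \<noteq> \<top>"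
  hence "(\<lambda>n. hist_hellinger n (hist X n \<omega>)) \<longlonglongrightarrow> 0"
    by (rule LIMSEQ_zero_of_suminf_ennreal_neq_top)
  thus "uniform_limit UNIV
     (\<lambda>n y. hist_predictive n (hist X n \<omega>) y - hist_likelihood n (hist X n \<omega>) y) (\<lambda>y. 0) sequentially"
    unfolding hist_hellinger_def using hist_densities C_pos L_pos
    by (intro uniform_limit_of_sq_hellinger_tendsto_0[where C = C and L = L]) auto
qed

theorem predictive_consistency:
  "(AE \<omega> in M. \<forall>y.
      (\<lambda>k. \<bar>qhat q \<Theta> \<pi>0 (\<lambda>i. X i \<omega>) (\<lambda>i. U i \<omega>) k y (X (k - 1) \<omega>) (U (k - 1) \<omega>)
            - q \<theta>s y (X (k - 1) \<omega>) (U (k - 1) \<omega>)\<bar>) \<longlonglongrightarrow> 0)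
  \<and> (AE \<omega> in M.
      (\<lambda>k. qhat q \<Theta> \<pi>0 (\<lambda>i. X i \<omega>) (\<lambda>i. U i \<omega>) k (X k \<omega>) (X (k - 1) \<omega>) (U (k - 1) \<omega>)
            - q \<theta>s (X k \<omega>) (X (k - 1) \<omega>) (U (k - 1) \<omega>)) \<longlonglongrightarrow> 0)"
  (is "(AE \<omega> in M. \<forall>y. ?pointwise \<omega> y) \<and> (AE \<omega> in M. ?along \<omega>)")
proof -
  let ?D = "\<lambda>\<omega> n y. hist_predictive n (hist X n \<omega>) y - hist_likelihood n (hist X n \<omega>) y"
  have shift: "?pointwise \<omega> y \<longleftrightarrow> (\<lambda>n. \<bar>?D \<omega> n y\<bar>) \<longlonglongrightarrow> 0"
    "?along \<omega> \<longleftrightarrow> (\<lambda>n. ?D \<omega> n (X (Suc n) \<omega>)) \<longlonglongrightarrow> 0" if "\<omega> \<in> space M" for \<omega> y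
    using that by (subst filterlim_sequentially_Suc[symmetric], simp add: qhat_Suc_hist q_hist_likelihood)+
  have "AE \<omega> in M. \<forall>y. ?pointwise \<omega> y"
  proof (rule AE_mp[OF AE_uniform_limit_hist_predictive], intro AE_I2 impI allI)
    fix \<omega> y assume \<omega>: "\<omega> \<in> space M" and lim: "uniform_limit UNIV (?D \<omega>) (\<lambda>y. 0) sequentially"
    have "(\<lambda>n. ?D \<omega> n y) \<longlonglongrightarrow> 0"
      using tendsto_uniform_limitI[OF lim] by simp
    thus "?pointwise \<omega> y"
      unfolding shift[OF \<omega>] by (rule tendsto_rabs_zero)
  qed
  moreover have "AE \<omega> in M. ?along \<omega>"
  proof (rule AE_mp[OF AE_uniform_limit_hist_predictive], intro AE_I2 impI)
    fix \<omega> assume \<omega>: "\<omega> \<in> space M" and lim: "uniform_limit UNIV (?D \<omega>) (\<lambda>y. 0) sequentially"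
    show "?along \<omega>"
      unfolding shift[OF \<omega>] using lim by (rule uniform_limit_imp_tendsto_along)
  qed
  ultimately show ?thesis ..
qed

end

theorem mainTheorem5:
  fixes M :: "'a measure"
    and N :: "'u measure"
    and X :: "nat \<Rightarrow> 'a \<Rightarrow> 'x::euclidean_space"
    and U :: "nat \<Rightarrow> 'a \<Rightarrow> 'u"
    and pol :: "nat \<Rightarrow> (nat \<Rightarrow> 'x) \<Rightarrow> 'u"
    and \<Theta> :: "'p set"
    and \<theta>s :: 'p
    and q :: "'p \<Rightarrow> 'x \<Rightarrow> 'x \<Rightarrow> 'u \<Rightarrow> real"
    and q' :: "'p \<Rightarrow> 'x \<Rightarrow> 'u \<Rightarrow> 'x \<Rightarrow> 'x \<Rightarrow>\<^sub>L real"
    and L :: real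
    and \<pi>0 :: "'p \<Rightarrow> real"
  assumes M: "prob_space M"
    and Theta_countable: "countable \<Theta>" and Theta_infinite: "infinite \<Theta>"
    and true_param: "\<theta>s \<in> \<Theta>"
    and X_meas: "\<And>k. X k \<in> borel_measurable M"
    and pol_meas: "\<And>k. pol k \<in> measurable (PiM {..k} (\<lambda>_. borel)) N"
    and U_def: "\<And>k \<omega>. \<omega> \<in> space M \<Longrightarrow> U k \<omega> = pol k (hist X k \<omega>)"
    and q_meas: "\<And>th. th \<in> \<Theta> \<Longrightarrow>
          (\<lambda>(y, x, u). q th y x u) \<in> borel_measurable (borel \<Otimes>\<^sub>M borel \<Otimes>\<^sub>M N)"
    and q_pos: "\<And>th y x u. th \<in> \<Theta> \<Longrightarrow> q th y x u > 0"
    and q_density: "\<And>th x u. th \<in> \<Theta> \<Longrightarrow> (\<integral>\<^sup>+ y. ennreal (q th y x u) \<partial>lborel) = 1"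
    and q_deriv: "\<And>th x u y. th \<in> \<Theta> \<Longrightarrow>
          ((\<lambda>y. q th y x u) has_derivative blinfun_apply (q' th x u y)) (at y)"
    and q_C1: "\<And>th x u. th \<in> \<Theta> \<Longrightarrow> continuous_on UNIV (q' th x u)"
    and q_deriv_bdd: "\<And>th x u y. th \<in> \<Theta> \<Longrightarrow> norm (q' th x u y) \<le> L"
    and transition: "\<And>k B A. B \<in> sets (PiM {..k} (\<lambda>_. borel)) \<Longrightarrow> A \<in> sets borel \<Longrightarrow>
          emeasure M {\<omega> \<in> space M. hist X k \<omega> \<in> B \<and> X (Suc k) \<omega> \<in> A} =
          (\<integral>\<^sup>+ \<omega>. indicator {\<omega> \<in> space M. hist X k \<omega> \<in> B} \<omega> *
              (\<integral>\<^sup>+ y. indicator A y * ennreal (q \<theta>s y (X k \<omega>) (U k \<omega>)) \<partial>lborel) \<partial>M)"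
    and prior_nonneg: "\<And>th. th \<in> \<Theta> \<Longrightarrow> \<pi>0 th \<ge> 0"
    and prior_sum: "(\<pi>0 has_sum 1) \<Theta>"
    and prior_true: "\<pi>0 \<theta>s > 0"
  shows "(AE \<omega> in M. \<forall>y.
            (\<lambda>k. \<bar>qhat q \<Theta> \<pi>0 (\<lambda>i. X i \<omega>) (\<lambda>i. U i \<omega>) k y (X (k - 1) \<omega>) (U (k - 1) \<omega>)
                  - q \<theta>s y (X (k - 1) \<omega>) (U (k - 1) \<omega>)\<bar>) \<longlonglongrightarrow> 0)
       \<and> (AE \<omega> in M.
            (\<lambda>k. qhat q \<Theta> \<pi>0 (\<lambda>i. X i \<omega>) (\<lambda>i. U i \<omega>) k (X k \<omega>) (X (k - 1) \<omega>) (U (k - 1) \<omega>)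
                  - q \<theta>s (X k \<omega>) (X (k - 1) \<omega>) (U (k - 1) \<omega>)) \<longlonglongrightarrow> 0)"
proof -
  have L_nonneg: "0 \<le> L"
    using norm_ge_zero q_deriv_bdd[OF true_param] by (rule order_trans)
  have lipschitz: "(L + 1)-lipschitz_on UNIV (\<lambda>y. q th y x u)" if "th \<in> \<Theta>" for th x u
  proof -
    have "L-lipschitz_on UNIV (\<lambda>y. q th y x u)"
      using q_deriv[OF that] q_deriv_bdd[OF that] L_nonneg
      by (intro bounded_derivative_imp_lipschitz) (auto simp flip: norm_blinfun.rep_eq)
    thus ?thesis
      by (rule lipschitz_on_le) simp
  qed
  define C where "C = max (2 * (L + 1)) (2 / measure lborel (ball (0::'x) 1))"
  have q_le: "q th y x u \<le> C" if "th \<in> \<Theta>" for th y x u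
    unfolding C_def using q_pos[OF that] lipschitz[OF that] q_density[OF that]
    by (intro lipschitz_density_le) (auto simp: less_imp_le)
  interpret bayesian_model q \<Theta> \<pi>0 \<theta>s C M N X U pol "L + 1"
  proof (intro bayesian_model.intro bayes_posterior.intro bayesian_model_axioms.intro)
    show "prob_weights \<Theta> \<pi>0"
      using prior_nonneg prior_sum by (simp add: prob_weights_def)
    show "0 < L + 1"
      using L_nonneg by simp
  qed (fact assms q_le lipschitz)+
  show ?thesis
    by (rule predictive_consistency)
qed

end
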